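(* For positive integers $d,n$ let $P^{d,n}$ be the class of simple graphs on $n$ vertices that admit a faithful orthogonal representation in $\mathbb{R}^d$. The graph property $P^{d,n}$ is not monotone-decreasing: there exist $d, n$, a graph $G \in P^{d,n}$ and an edge $uv$ of $G$ such that the graph $G \setminus uv$ obtained by deleting the edge $uv$ is not in $P^{d,n}$.
   Context: All graphs are finite, simple and undirected. A faithful orthogonal representation of a graph $G$ in $\mathbb{R}^d$ is an assignment of unit vectors $v \mapsto |v\rangle \in \mathbb{R}^d$ to the vertices such that two vertices are adjacent iff their vectors are orthogonal, and distinct vertices are assigned distinct vectors. A graph property is monotone-decreasing if it is closed under removal of edges (and vertices). *)

theory Defs
  imports Main "HOL-Analysis.Analysis"
begin

definition simple_graph :: "nat \<Rightarrow> (nat \<Rightarrow> nat \<Rightarrow> bool) \<Rightarrow> bool" where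
  "simple_graph n E \<longleftrightarrow>
     (\<forall>u v. E u v \<longrightarrow> u < n \<and> v < n) \<and>
     (\<forall>u v. E u v \<longrightarrow> E v u) \<and>
     (\<forall>u. \<not> E u u)"

text \<open>Vectors of R^d are represented as functions nat => real vanishing outside {0..<d}.\<close>

definition vec_in :: "nat \<Rightarrow> (nat \<Rightarrow> real) \<Rightarrow> bool" where
  "vec_in d x \<longleftrightarrow> (\<forall>i\<ge>d. x i = 0)"

definition inner_d :: "nat \<Rightarrow> (nat \<Rightarrow> real) \<Rightarrow> (nat \<Rightarrow> real) \<Rightarrow> real" where
  "inner_d d x y = (\<Sum>i<d. x i * y i)"

definition faithful_orth_rep ::
    "nat \<Rightarrow> nat \<Rightarrow> (nat \<Rightarrow> nat \<Rightarrow> bool) \<Rightarrow> (nat \<Rightarrow> nat \<Rightarrow> real) \<Rightarrow> bool" where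
  "faithful_orth_rep d n E f \<longleftrightarrow>
     (\<forall>v<n. vec_in d (f v) \<and> inner_d d (f v) (f v) = 1) \<and>
     (\<forall>u<n. \<forall>v<n. u \<noteq> v \<longrightarrow> (E u v \<longleftrightarrow> inner_d d (f u) (f v) = 0)) \<and>
     (\<forall>u<n. \<forall>v<n. u \<noteq> v \<longrightarrow> f u \<noteq> f v)"

definition P_class :: "nat \<Rightarrow> nat \<Rightarrow> (nat \<Rightarrow> nat \<Rightarrow> bool) \<Rightarrow> bool" where
  "P_class d n E \<longleftrightarrow> simple_graph n E \<and> (\<exists>f. faithful_orth_rep d n E f)"

definition delete_edge :: "(nat \<Rightarrow> nat \<Rightarrow> bool) \<Rightarrow> nat \<Rightarrow> nat \<Rightarrow> nat \<Rightarrow> nat \<Rightarrow> bool" where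
  "delete_edge E u v = (\<lambda>x y. E x y \<and> {x, y} \<noteq> {u, v})"

end

theory Submission
  imports Defs
begin

text \<open>In the plane the orthogonal complement of a nonzero vector is a line. Hence in a faithful
  orthogonal representation f in R^2 the ends of any path a b c d are represented by orthogonal
  vectors: f a and f c both lie on the line orthogonal to f b, so f a is parallel to f c and
  therefore orthogonal to f d. So every graph in P(2,n) containing a path a b c d also contains
  the edge a d. The 4-cycle lies in P(2,4), represented by e1, e2, -e1, -e2, but deleting one of
  its edges leaves a path whose ends are not adjacent.\<close>

lemma inner_d_commute: "inner_d d x y = inner_d d y x"
  by (simp add: inner_d_def mult.commute)

lemma inner_d_2: "inner_d 2 x y = x 0 * y 0 + x 1 * y 1"
  by (simp add: inner_d_def numeral_2_eq_2)

lemma inner_d_2_orthogonal_collinear: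
  assumes "inner_d 2 a x = 0" "inner_d 2 a y = 0" "inner_d 2 a a \<noteq> 0"
  shows "x 0 * y 1 = x 1 * y 0"
proof -
  have "a 0 * (x 0 * y 1 - x 1 * y 0) = 0" "a 1 * (x 0 * y 1 - x 1 * y 0) = 0"
    using assms(1,2) unfolding inner_d_2 by algebra+
  then show ?thesis
    using assms(3) unfolding inner_d_2 by auto
qed

lemma inner_d_2_orthogonal_transfer:
  assumes "inner_d 2 a x = 0" "inner_d 2 a y = 0" "inner_d 2 y z = 0"
    and "inner_d 2 a a \<noteq> 0" "inner_d 2 y y \<noteq> 0"
  shows "inner_d 2 x z = 0"
proof -
  have collinear: "x 0 * y 1 = x 1 * y 0"
    using assms(1,2,4) by (rule inner_d_2_orthogonal_collinear)
  have "y 0 * inner_d 2 x z = 0" "y 1 * inner_d 2 x z = 0"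
    using assms(3) collinear unfolding inner_d_2 by algebra+
  then show ?thesis
    using assms(5) unfolding inner_d_2 by auto
qed

lemma P_class_2_path_closes:
  assumes "P_class 2 n E" "E a b" "E b c" "E c d" "a \<noteq> d"
  shows "E a d"
proof -
  obtain f where f: "faithful_orth_rep 2 n E f" and G: "simple_graph n E"
    using assms(1) unfolding P_class_def by blast
  have vertices: "a < n" "b < n" "c < n" "d < n" and loopless: "a \<noteq> b" "b \<noteq> c" "c \<noteq> d"
    using G assms(2-4) unfolding simple_graph_def by metis+
  have adjacent_iff: "E u v \<longleftrightarrow> inner_d 2 (f u) (f v) = 0" if "u < n" "v < n" "u \<noteq> v" for u v
    using f that unfolding faithful_orth_rep_def by blast
  have unit: "inner_d 2 (f v) (f v) = 1" if "v < n" for v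
    using f that unfolding faithful_orth_rep_def by blast
  have "inner_d 2 (f a) (f d) = 0"
  proof (rule inner_d_2_orthogonal_transfer)
    show "inner_d 2 (f b) (f a) = 0"
      using assms(2) adjacent_iff[of a b] vertices loopless by (simp add: inner_d_commute)
    show "inner_d 2 (f b) (f c) = 0" "inner_d 2 (f c) (f d) = 0"
      using assms(3,4) adjacent_iff vertices loopless by blast+
    show "inner_d 2 (f b) (f b) \<noteq> 0" "inner_d 2 (f c) (f c) \<noteq> 0"
      using unit vertices by simp_all
  qed
  then show ?thesis
    using adjacent_iff vertices assms(5) by blast
qed

definition cycle4 :: "nat \<Rightarrow> nat \<Rightarrow> bool" where
  "cycle4 u v \<longleftrightarrow> u < 4 \<and> v < 4 \<and> odd (u + v)"

definition cycle4_rep :: "nat \<Rightarrow> nat \<Rightarrow> real" where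
  "cycle4_rep v i = (if i = v mod 2 then if v < 2 then 1 else -1 else 0)"

lemma less_4_cases: "(v::nat) < 4 \<longleftrightarrow> v = 0 \<or> v = 1 \<or> v = 2 \<or> v = 3"
  by auto

lemma faithful_orth_rep_cycle4: "faithful_orth_rep 2 4 cycle4 cycle4_rep"
proof -
  have distinct: "cycle4_rep u \<noteq> cycle4_rep v" if "u < 4" "v < 4" "u \<noteq> v" for u v
  proof
    assume "cycle4_rep u = cycle4_rep v"
    then have "cycle4_rep u 0 = cycle4_rep v 0" "cycle4_rep u 1 = cycle4_rep v 1"
      by simp_all
    then show False
      using that unfolding less_4_cases cycle4_rep_def by auto
  qed
  show ?thesis
    unfolding faithful_orth_rep_def
    using distinct by (auto simp: inner_d_2 vec_in_def cycle4_rep_def cycle4_def less_4_cases)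
qed

lemma P_class_cycle4: "P_class 2 4 cycle4"
  unfolding P_class_def
proof
  show "simple_graph 4 cycle4"
    unfolding simple_graph_def cycle4_def by auto
  show "\<exists>f. faithful_orth_rep 2 4 cycle4 f"
    using faithful_orth_rep_cycle4 by blast
qed

lemma not_P_class_cycle4_delete_edge: "\<not> P_class 2 4 (delete_edge cycle4 0 3)"
proof
  let ?P = "delete_edge cycle4 0 3"
  assume "P_class 2 4 ?P"
  moreover have "?P 0 1" "?P 1 2" "?P 2 3" "\<not> ?P 0 3"
    by (auto simp: delete_edge_def cycle4_def doubleton_eq_iff)
  ultimately show False
    using P_class_2_path_closes[of 4 ?P 0 1 2 3] by simp
qed

theorem mainTheorem3:
  shows "\<exists>d n E u v. 0 < d \<and> 0 < n \<and> P_class d n E \<and> E u v \<and>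
           \<not> P_class d n (delete_edge E u v)"
proof -
  have "cycle4 0 3"
    by (simp add: cycle4_def)
  with P_class_cycle4 not_P_class_cycle4_delete_edge show ?thesis
    by (intro exI[of _ 2] exI[of _ 4] exI[of _ cycle4] exI[of _ 0] exI[of _ 3]) simp
qed

end
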